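(* Let $\mathbf z=(z_1,z_2,z_3)\in\mathbb{R}^3$ with $z_2>0$ and $z_3>0$, and let $\Lambda^*$ be as defined in the context. Then $$\Lambda^*(\mathbf z)=\ln\pi+\sup_{\lambda_1\neq 0,\ \beta>1}\Big\{\tfrac{z_2}{2}+\tfrac{z_3}{2}+\lambda_1z_1-|\lambda_1|\beta\sqrt{z_2z_3}+\tfrac12\ln(\beta^2-1)+\ln|\lambda_1|-\ln\Big(\pi+2\arctan\Big(\tfrac{\lambda_1}{|\lambda_1|\sqrt{\beta^2-1}}\Big)\Big)\Big\}.$$
   Context: For $\boldsymbol\lambda=(\lambda_1,\lambda_2,\lambda_3)\in\mathbb{R}^3$ let $D=\lambda_1^2-(1-2\lambda_2)(1-2\lambda_3)$, and let $$S=\{\boldsymbol\lambda:\lambda_2<\tfrac12,\ \lambda_3<\tfrac12,\ D<0\}.$$ For $\boldsymbol\lambda\in S$ put $$\Lambda(\boldsymbol\lambda)=\ln\left(\pi+2\arctan\left(\frac{\lambda_1}{\sqrt{-D}}\right)\right)-\ln\pi-\tfrac12\ln(-D).$$ This is the logarithmic moment generating function $\ln\mathbb{E}[\exp(\lambda_1\hat X\hat Y+\lambda_2\hat X^2+\lambda_3\hat Y^2)]$ for independent half-normal $\hat X,\hat Y$. The Fenchel–Legendre transform is $$\Lambda^*(\mathbf z)=\sup_{\boldsymbol\lambda\in S}\{\langle\boldsymbol\lambda,\mathbf z\rangle-\Lambda(\boldsymbol\lambda)\}.$$ *)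

theory Defs
  imports "HOL-Analysis.Analysis"
begin

definition Dlam :: "real \<times> real \<times> real \<Rightarrow> real" where
  "Dlam l = (case l of (l1, l2, l3) \<Rightarrow> l1\<^sup>2 - (1 - 2 * l2) * (1 - 2 * l3))"

definition Sdom :: "(real \<times> real \<times> real) set" where
  "Sdom = {(l1, l2, l3). l2 < 1/2 \<and> l3 < 1/2 \<and> Dlam (l1, l2, l3) < 0}"

definition LogMGF :: "real \<times> real \<times> real \<Rightarrow> real" where
  "LogMGF l = (case l of (l1, l2, l3) \<Rightarrow>
     ln (pi + 2 * arctan (l1 / sqrt (- Dlam l))) - ln pi - (1/2) * ln (- Dlam l))"

definition LegendreT :: "real \<times> real \<times> real \<Rightarrow> ereal" where
  "LegendreT z = (SUP l \<in> Sdom. ereal (fst l * fst z + fst (snd l) * fst (snd z)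
                                     + snd (snd l) * snd (snd z) - LogMGF l))"

end

theory Submission
  imports Defs
begin

text \<open>Put \<open>a = 1 - 2\<lambda>\<^sub>2\<close> and \<open>c = 1 - 2\<lambda>\<^sub>3\<close>. On \<open>S\<close> these are positive with
  \<open>\<lambda>\<^sub>1\<^sup>2 < ac\<close>, and the objective depends on \<open>(a, c)\<close> only through the term
  \<open>-(az\<^sub>2 + cz\<^sub>3)/2\<close> and through the product \<open>ac\<close>. For \<open>\<lambda>\<^sub>1 \<noteq> 0\<close> write
  \<open>ac = \<lambda>\<^sub>1\<^sup>2\<beta>\<^sup>2\<close> with \<open>\<beta> > 1\<close>; by AM-GM the linear term is at most
  \<open>-|\<lambda>\<^sub>1|\<beta>\<surd>(z\<^sub>2z\<^sub>3)\<close>, with equality when \<open>az\<^sub>2 = cz\<^sub>3\<close>. Points with \<open>\<lambda>\<^sub>1 = 0\<close>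
  add nothing to the supremum because the objective is continuous in \<open>\<lambda>\<^sub>1\<close>.\<close>

definition legendre_objective :: "real \<times> real \<times> real \<Rightarrow> real \<times> real \<times> real \<Rightarrow> real" where
  "legendre_objective z l =
     fst l * fst z + fst (snd l) * fst (snd z) + snd (snd l) * snd (snd z) - LogMGF l"

definition reduced_objective :: "real \<Rightarrow> real \<Rightarrow> real \<Rightarrow> real \<times> real \<Rightarrow> real" where
  "reduced_objective z1 z2 z3 p =
     z2 / 2 + z3 / 2 + fst p * z1 - \<bar>fst p\<bar> * snd p * sqrt (z2 * z3)
     + (1/2) * ln ((snd p)\<^sup>2 - 1) + ln \<bar>fst p\<bar>
     - ln (pi + 2 * arctan (fst p / (\<bar>fst p\<bar> * sqrt ((snd p)\<^sup>2 - 1))))"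

lemma LegendreT_eq_SUP_objective:
  "LegendreT z = (SUP l \<in> Sdom. ereal (legendre_objective z l))"
  by (simp add: LegendreT_def legendre_objective_def)

lemma Sdom_iff:
  assumes "a = 1 - 2 * l2" and "c = 1 - 2 * l3"
  shows "(l1, l2, l3) \<in> Sdom \<longleftrightarrow> a > 0 \<and> c > 0 \<and> l1\<^sup>2 < a * c"
  using assms by (auto simp: Sdom_def Dlam_def)

lemma legendre_objective_eq:
  assumes "a = 1 - 2 * l2" and "c = 1 - 2 * l3"
  shows "legendre_objective (z1, z2, z3) (l1, l2, l3) =
     ln pi + l1 * z1 + z2 / 2 + z3 / 2 - (a * z2 + c * z3) / 2
     + (1/2) * ln (a * c - l1\<^sup>2) - ln (pi + 2 * arctan (l1 / sqrt (a * c - l1\<^sup>2)))"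
proof -
  have "- Dlam (l1, l2, l3) = a * c - l1\<^sup>2"
    by (simp add: Dlam_def assms)
  then show ?thesis
    by (simp add: legendre_objective_def LogMGF_def assms field_simps)
qed

lemma ln_abs_power2: "x \<noteq> 0 \<Longrightarrow> ln (x\<^sup>2) = 2 * ln \<bar>x\<bar>"
  for x :: real
  by (metis ln_realpow power2_abs of_nat_numeral zero_less_abs_iff)

lemma legendre_objective_polar:
  assumes shift: "a = 1 - 2 * l2" "c = 1 - 2 * l3"
    and l1: "l1 \<noteq> 0" and b: "b > 1" and ac: "a * c = l1\<^sup>2 * b\<^sup>2"
  shows "legendre_objective (z1, z2, z3) (l1, l2, l3) =
     ln pi + reduced_objective z1 z2 z3 (l1, b)
     + \<bar>l1\<bar> * b * sqrt (z2 * z3) - (a * z2 + c * z3) / 2"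
proof -
  have b2: "b\<^sup>2 - 1 > 0"
    using b by (simp add: power2_eq_square less_1_mult)
  have gap: "a * c - l1\<^sup>2 = l1\<^sup>2 * (b\<^sup>2 - 1)"
    by (simp add: ac algebra_simps)
  have "sqrt (a * c - l1\<^sup>2) = \<bar>l1\<bar> * sqrt (b\<^sup>2 - 1)"
    by (simp add: gap real_sqrt_mult)
  moreover have "ln (a * c - l1\<^sup>2) = 2 * ln \<bar>l1\<bar> + ln (b\<^sup>2 - 1)"
    using b2 l1 by (simp add: gap ln_mult ln_abs_power2)
  ultimately show ?thesis
    by (simp add: legendre_objective_eq[OF shift] reduced_objective_def algebra_simps)
qed

lemma legendre_objective_le_reduced:
  assumes z: "z2 > 0" "z3 > 0" and l: "(l1, l2, l3) \<in> Sdom" and l1: "l1 \<noteq> 0"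
  shows "\<exists>b>1. legendre_objective (z1, z2, z3) (l1, l2, l3)
                 \<le> ln pi + reduced_objective z1 z2 z3 (l1, b)"
proof -
  define a where "a = 1 - 2 * l2"
  define c where "c = 1 - 2 * l3"
  have a: "a > 0" and c: "c > 0" and lac: "l1\<^sup>2 < a * c"
    using l Sdom_iff[OF a_def c_def] by auto
  define b where "b = sqrt (a * c) / \<bar>l1\<bar>"
  have "\<bar>l1\<bar> < sqrt (a * c)"
    using lac by (metis abs_ge_zero real_sqrt_abs real_sqrt_less_iff)
  then have b: "b > 1"
    using l1 by (simp add: b_def)
  have ac: "a * c = l1\<^sup>2 * b\<^sup>2"
    using l1 a c by (simp add: b_def power_divide)
  have "\<bar>l1\<bar> * b * sqrt (z2 * z3) = sqrt ((a * z2) * (c * z3))"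
    using l1 by (simp add: b_def real_sqrt_mult ac_simps)
  also have "\<dots> \<le> (a * z2 + c * z3) / 2"
    using a c z by (intro arith_geo_mean_sqrt) auto
  finally show ?thesis
    using b by (auto simp: legendre_objective_polar[OF a_def c_def l1 b ac])
qed

lemma reduced_objective_attained:
  assumes z: "z2 > 0" "z3 > 0" and l1: "l1 \<noteq> 0" and b: "b > 1"
  shows "\<exists>l2 l3. (l1, l2, l3) \<in> Sdom \<and>
           legendre_objective (z1, z2, z3) (l1, l2, l3) = ln pi + reduced_objective z1 z2 z3 (l1, b)"
proof -
  \<comment> \<open>balance the two terms of the AM-GM bound\<close>
  define a where "a = \<bar>l1\<bar> * b * sqrt z3 / sqrt z2"
  define c where "c = \<bar>l1\<bar> * b * sqrt z2 / sqrt z3"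
  define l2 where "l2 = (1 - a) / 2"
  define l3 where "l3 = (1 - c) / 2"
  have shift: "a = 1 - 2 * l2" "c = 1 - 2 * l3"
    by (simp_all add: l2_def l3_def field_simps)
  have ac: "a * c = l1\<^sup>2 * b\<^sup>2"
    using z by (simp add: a_def c_def power2_eq_square field_simps)
  have "l1\<^sup>2 * 1 < l1\<^sup>2 * b\<^sup>2"
    using l1 b by (intro mult_strict_left_mono)
      (auto simp: power2_eq_square less_1_mult zero_less_mult_iff)
  then have "(l1, l2, l3) \<in> Sdom"
    using l1 b z by (simp add: Sdom_iff[OF shift] ac) (simp add: a_def c_def)
  moreover have "a * z2 = \<bar>l1\<bar> * b * sqrt (z2 * z3)" "c * z3 = \<bar>l1\<bar> * b * sqrt (z2 * z3)"
    using z by (simp_all add: a_def c_def real_sqrt_mult field_simps)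
  ultimately show ?thesis
    by (intro exI[of _ l2] exI[of _ l3]) (simp add: legendre_objective_polar[OF shift l1 b ac])
qed

lemma isCont_ereal_le_of_eventually_le:
  fixes f :: "'a::{perfect_space,t2_space} \<Rightarrow> real" and S :: ereal
  assumes "isCont f x" and "eventually (\<lambda>y. ereal (f y) \<le> S) (at x)"
  shows "ereal (f x) \<le> S"
proof (rule tendsto_upperbound)
  show "((\<lambda>y. ereal (f y)) \<longlongrightarrow> ereal (f x)) (at x)"
    using assms(1) by (intro tendsto_ereal) (simp add: isCont_def)
qed (use assms(2) in simp_all)

lemma legendre_objective_axis_le:
  assumes l: "(0, l2, l3) \<in> Sdom"
    and off_axis: "\<And>l1. l1 \<noteq> 0 \<Longrightarrow> (l1, l2, l3) \<in> Sdom \<Longrightarrow>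
                     ereal (legendre_objective (z1, z2, z3) (l1, l2, l3)) \<le> S"
  shows "ereal (legendre_objective (z1, z2, z3) (0, l2, l3)) \<le> S"
proof (rule isCont_ereal_le_of_eventually_le
    [where f = "\<lambda>l1. legendre_objective (z1, z2, z3) (l1, l2, l3)"])
  define a where "a = 1 - 2 * l2"
  define c where "c = 1 - 2 * l3"
  have a: "a > 0" and c: "c > 0"
    using l Sdom_iff[OF a_def c_def] by auto
  have "isCont (\<lambda>l1. ln pi + l1 * z1 + z2 / 2 + z3 / 2 - (a * z2 + c * z3) / 2
     + (1/2) * ln (a * c - l1\<^sup>2) - ln (pi + 2 * arctan (l1 / sqrt (a * c - l1\<^sup>2)))) 0"
    using a c arctan_lbound by (intro continuous_intros) (auto simp: add_pos_nonneg)
  then show "isCont (\<lambda>l1. legendre_objective (z1, z2, z3) (l1, l2, l3)) 0"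
    by (simp add: legendre_objective_eq[OF a_def c_def])
  have "((\<lambda>l1::real. l1\<^sup>2) \<longlongrightarrow> 0) (at 0)"
    by (auto intro!: tendsto_eq_intros)
  from order_tendstoD(2)[OF this] have "eventually (\<lambda>l1. l1\<^sup>2 < a * c) (at 0)"
    using a c by simp
  then show "eventually (\<lambda>l1. ereal (legendre_objective (z1, z2, z3) (l1, l2, l3)) \<le> S) (at 0)"
    using eventually_neq_at_within[of 0 0 UNIV]
    by eventually_elim (use a c off_axis Sdom_iff[OF a_def c_def] in auto)
qed

lemma LegendreT_eq_SUP_reduced_objective:
  assumes z: "z2 > 0" "z3 > 0"
  shows "LegendreT (z1, z2, z3) =
           (SUP p \<in> {(l1, b). l1 \<noteq> 0 \<and> b > 1}. ereal (ln pi + reduced_objective z1 z2 z3 p))"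
    (is "_ = ?R")
proof (rule antisym)
  have off_axis: "ereal (legendre_objective (z1, z2, z3) (l1, l2, l3)) \<le> ?R"
    if l1: "l1 \<noteq> 0" and l: "(l1, l2, l3) \<in> Sdom" for l1 l2 l3
  proof -
    obtain b where "b > 1" and
      "legendre_objective (z1, z2, z3) (l1, l2, l3) \<le> ln pi + reduced_objective z1 z2 z3 (l1, b)"
      using legendre_objective_le_reduced[OF z l l1] by blast
    then show ?thesis
      using l1 by (intro SUP_upper2[of "(l1, b)"]) auto
  qed
  show "LegendreT (z1, z2, z3) \<le> ?R"
    unfolding LegendreT_eq_SUP_objective
  proof (rule SUP_least)
    fix l assume "l \<in> Sdom"
    moreover obtain l1 l2 l3 where "l = (l1, l2, l3)"
      by (cases l)
    ultimately show "ereal (legendre_objective (z1, z2, z3) l) \<le> ?R"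
      using off_axis legendre_objective_axis_le[of l2 l3 z1 z2 z3 ?R] by (cases "l1 = 0") auto
  qed
  show "?R \<le> LegendreT (z1, z2, z3)"
    unfolding LegendreT_eq_SUP_objective
  proof (rule SUP_mono)
    fix p :: "real \<times> real"
    assume "p \<in> {(l1, b). l1 \<noteq> 0 \<and> b > 1}"
    then show "\<exists>l\<in>Sdom. ereal (ln pi + reduced_objective z1 z2 z3 p)
                        \<le> ereal (legendre_objective (z1, z2, z3) l)"
      using reduced_objective_attained[OF z, of "fst p" "snd p" z1] by force
  qed
qed

theorem lemma8:
  fixes z1 z2 z3 :: real
  assumes "z2 > 0" and "z3 > 0"
  shows "LegendreT (z1, z2, z3) =
    ereal (ln pi) +
    (SUP p \<in> {(l1, b). l1 \<noteq> (0::real) \<and> b > (1::real)}.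
       ereal (z2 / 2 + z3 / 2 + fst p * z1 - \<bar>fst p\<bar> * snd p * sqrt (z2 * z3)
              + (1/2) * ln ((snd p)\<^sup>2 - 1) + ln \<bar>fst p\<bar>
              - ln (pi + 2 * arctan (fst p / (\<bar>fst p\<bar> * sqrt ((snd p)\<^sup>2 - 1))))))"
proof -
  have "{(l1, b). l1 \<noteq> (0::real) \<and> b > (1::real)} \<noteq> {}"
    by (auto intro!: exI[of _ 1] exI[of _ 2])
  from SUP_ereal_add_right[OF this, of "ereal (ln pi)" "\<lambda>p. ereal (reduced_objective z1 z2 z3 p)"]
  show ?thesis
    by (simp add: LegendreT_eq_SUP_reduced_objective[OF assms] reduced_objective_def)
qed

end
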